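(* Let $H=(v_1,\dots,v_6)$ be an embedded equilateral hexagon in standard position whose action-angle coordinates $(d_1,d_2,d_3,\theta_1,\theta_2,\theta_3)$ for the $T_{135}$ triangulation are defined, and let $d=\sqrt{2d_1^2d_2^2+2d_1^2d_3^2+2d_2^2d_3^2-d_1^4-d_2^4-d_3^4}$. If $J(H)=(1,1)$, then the following nine quantities are all positive: \begin{align*} f_1= & d_2\sqrt{4-d_2^2}\sin\theta_2\big(d_3d-(d_1^2-d_2^2+d_3^2)\sqrt{4-d_3^2}\cos\theta_3\big)- d_3\sqrt{4-d_3^2}\sin\theta_3\big(d_2d-(d_1^2+d_2^2-d_3^2)\sqrt{4-d_2^2}\cos\theta_2\big),\\ g_1= & \sqrt{4-d_2^2}\Big(\tfrac{-d_1^2+d_2^2+d_3^2}{2d_2 d_3}\cos\theta_2\sin\theta_3+\sin\theta_2\cos\theta_3\Big)-\tfrac{d\sin\theta_3}{2d_3},\\ h_1= & \sqrt{4-d_3^2}\Big(\tfrac{-d_1^2+d_2^2+d_3^2}{2d_2 d_3}\cos\theta_3\sin\theta_2+\sin\theta_3\cos\theta_2\Big)-\tfrac{d\sin\theta_2}{2d_2},\\ f_2 = & d_3\sqrt{4-d_3^2}\sin\theta_3\big(d_1d-(d_1^2+d_2^2-d_3^2)\sqrt{4-d_1^2}\cos\theta_1\big)- d_1\sqrt{4-d_1^2}\sin\theta_1\big(d_3d-(-d_1^2+d_2^2+d_3^2)\sqrt{4-d_3^2}\cos\theta_3\big),\\ g_2 = &\sqrt{4-d_3^2}\Big(\tfrac{d_1^2-d_2^2+d_3^2}{2d_1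 d_3}\cos\theta_3\sin\theta_1+\sin\theta_3\cos\theta_1\Big)-\tfrac{d\sin\theta_1}{2d_1},\\ h_2 = &\sqrt{4-d_1^2}\Big(\tfrac{d_1^2-d_2^2+d_3^2}{2d_1 d_3}\cos\theta_1\sin\theta_3+\sin\theta_1\cos\theta_3\Big)-\tfrac{d\sin\theta_3}{2d_3},\\ f_3 = & d_1\sqrt{4-d_1^2}\sin\theta_1\big(d_2d-(-d_1^2+d_2^2+d_3^2)\sqrt{4-d_2^2}\cos\theta_2\big)-d_2\sqrt{4-d_2^2}\sin\theta_2\big(d_1d-(d_1^2-d_2^2+d_3^2)\sqrt{4-d_1^2}\cos\theta_1\big),\\ g_3 = &\sqrt{4-d_1^2}\Big(\tfrac{d_1^2+d_2^2-d_3^2}{2d_1 d_2}\cos\theta_1\sin\theta_2+\sin\theta_1\cos\theta_2\Big)-\tfrac{d\sin\theta_2}{2d_2},\\ h_3 = &\sqrt{4-d_2^2}\Big( \tfrac{d_1^2+d_2^2-d_3^2}{2d_1 d_2}\cos\theta_2\sin\theta_1+\sin\theta_2\cos\theta_1\Big)-\tfrac{d\sin\theta_1}{2d_1}. \end{align*}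
   Context: An equilateral hexagon is an ordered 6-tuple $H=(v_1,\dots,v_6)$ in $\mathbb{R}^3$ with $\|v_i-v_{i+1}\|=1$ (indices mod 6), edges $e_i=[v_i,v_{i+1}]$, oriented $v_1\to v_2\to\cdots\to v_6\to v_1$; embedded means non-adjacent edges are disjoint and adjacent ones meet only at their common endpoint. Standard position: $v_1=0$, $v_3$ on the positive $x$-axis, $v_5$ in the $xy$-plane with positive $y$-coordinate. Action-angle coordinates ($T_{135}$ triangulation), defined when $v_1,v_3,v_5$ are not collinear and $0<d_i<2$: $d_1=\|v_3-v_1\|$, $d_2=\|v_5-v_3\|$, $d_3=\|v_1-v_5\|$; with $m_1,m_2,m_3$ the midpoints of $[v_1,v_3],[v_3,v_5],[v_5,v_1]$, $u_1,u_2,u_3$ the unit vectors in the $xy$-plane perpendicular to these segments pointing toward the opposite vertex of triangle $v_1v_3v_5$ (toward $v_5,v_1,v_3$ respectively), and $e_z=(0,0,1)$, the angles $\theta_i\in[0,2\pi)$ are determined by $v_{2i}=m_i+\tfrac12\sqrt{4-d_i^2}(\cos\theta_i\,u_i+\sin\theta_i\,e_z)$ (regular planar hexagon: all $\theta_i=\pi$). Explicitly $v_3=(d_1,0,0)$, $v_5=\big(\tfrac{d_1^2-d_2^2+d_3^2}{2d_1},\tfrac{d}{2d_1},0\big)$, $v_2=\big(\tfrac{d_1}{2},\tfrac12\sqrt{4-d_1^2}\cos\theta_1,\tfrac12\sqrt{4-d_1^2}\sin\theta_1\big)$. Joint Chirality-Curl: $curl(H)=\operatorname{sign}\big((v_3-v_1)\times(v_5-v_1)\cdot(v_2-v_1)\big)$.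 For $i=2,4,6$, $T_i$ is the open triangular disk with vertices $v_{i-1},v_i,v_{i+1}$, oriented by the right-hand rule (normal $(v_i-v_{i-1})\times(v_{i+1}-v_i)$), and $\Delta_i$ is the algebraic intersection number of $T_i$ with the oriented polygon $H$. Then $J(H)=(\Delta_2\Delta_4\Delta_6,\ \Delta_2^2\Delta_4^2\Delta_6^2\,curl(H))$. *)

theory Defs
  imports "HOL-Analysis.Analysis"
begin

text \<open>A hexagon is given by H :: nat => real^3 with v_k = H k for k = 1..6.
  cv H i is the vertex with cyclic index i (indices taken mod 6 into 1..6).\<close>

definition cv :: "(nat \<Rightarrow> real^3) \<Rightarrow> nat \<Rightarrow> real^3" where
  "cv H i = H (Suc ((i + 5) mod 6))"

definition hex_edge :: "(nat \<Rightarrow> real^3) \<Rightarrow> nat \<Rightarrow> (real^3) set" where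
  "hex_edge H i = closed_segment (cv H i) (cv H (i + 1))"

definition equilateral_hex :: "(nat \<Rightarrow> real^3) \<Rightarrow> bool" where
  "equilateral_hex H \<longleftrightarrow> (\<forall>i\<in>{1..6}. dist (cv H i) (cv H (i + 1)) = 1)"

definition embedded_hex :: "(nat \<Rightarrow> real^3) \<Rightarrow> bool" where
  "embedded_hex H \<longleftrightarrow>
     (\<forall>i\<in>{1..6}. hex_edge H i \<inter> hex_edge H (i + 1) = {cv H (i + 1)}
        \<and> (\<forall>j\<in>{i+2..i+4}. hex_edge H i \<inter> hex_edge H j = {}))"

definition standard_position :: "(nat \<Rightarrow> real^3) \<Rightarrow> bool" where
  "standard_position H \<longleftrightarrow>
     H 1 = 0 \<and> H 3 $ 1 > 0 \<and> H 3 $ 2 = 0 \<and> H 3 $ 3 = 0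
     \<and> H 5 $ 3 = 0 \<and> H 5 $ 2 > 0"

definition perp_toward :: "real^3 \<Rightarrow> real^3 \<Rightarrow> real^3 \<Rightarrow> real^3" where
  "perp_toward a b c =
     (let w = c - a; p = w - ((w \<bullet> (b - a)) / ((b - a) \<bullet> (b - a))) *\<^sub>R (b - a)
      in (1 / norm p) *\<^sub>R p)"

definition e_z :: "real^3" where
  "e_z = (\<chi> i. if i = 3 then 1 else 0)"

definition action_angle :: "(nat \<Rightarrow> real^3) \<Rightarrow> real \<Rightarrow> real \<Rightarrow> real \<Rightarrow> real \<Rightarrow> real \<Rightarrow> real \<Rightarrow> bool" where
  "action_angle H d1 d2 d3 t1 t2 t3 \<longleftrightarrow>
     \<not> collinear {H 1, H 3, H 5} \<and>
     d1 = dist (H 3) (H 1) \<and> d2 = dist (H 5) (H 3) \<and> d3 = dist (H 1) (H 5) \<and>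
     0 < d1 \<and> d1 < 2 \<and> 0 < d2 \<and> d2 < 2 \<and> 0 < d3 \<and> d3 < 2 \<and>
     t1 \<in> {0..<2*pi} \<and> t2 \<in> {0..<2*pi} \<and> t3 \<in> {0..<2*pi} \<and>
     H 2 = midpoint (H 1) (H 3) + (sqrt (4 - d1\<^sup>2) / 2) *\<^sub>R
             (cos t1 *\<^sub>R perp_toward (H 1) (H 3) (H 5) + sin t1 *\<^sub>R e_z) \<and>
     H 4 = midpoint (H 3) (H 5) + (sqrt (4 - d2\<^sup>2) / 2) *\<^sub>R
             (cos t2 *\<^sub>R perp_toward (H 3) (H 5) (H 1) + sin t2 *\<^sub>R e_z) \<and>
     H 6 = midpoint (H 5) (H 1) + (sqrt (4 - d3\<^sup>2) / 2) *\<^sub>R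
             (cos t3 *\<^sub>R perp_toward (H 5) (H 1) (H 3) + sin t3 *\<^sub>R e_z)"

definition hex_curl :: "(nat \<Rightarrow> real^3) \<Rightarrow> real" where
  "hex_curl H = sgn (cross3 (H 3 - H 1) (H 5 - H 1) \<bullet> (H 2 - H 1))"

definition open_tri :: "real^3 \<Rightarrow> real^3 \<Rightarrow> real^3 \<Rightarrow> (real^3) set" where
  "open_tri p q r = {a *\<^sub>R p + b *\<^sub>R q + c *\<^sub>R r | a b c.
        0 < a \<and> 0 < b \<and> 0 < c \<and> a + b + c = 1}"

text \<open>Transversal crossings in the interior of the edge count sgn(n.dir);
  a crossing exactly at an endpoint of the edge counts half (so the two edges through
  a vertex lying in T_i together contribute the local intersection index).\<close>
definition edge_tri_int :: "(nat \<Rightarrow> real^3) \<Rightarrow> nat \<Rightarrow> nat \<Rightarrow> real" where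
  "edge_tri_int H i j =
     (let p = cv H (i + 5); q = cv H i; r = cv H (i + 1);
          n = cross3 (q - p) (r - q);
          a = cv H j; dir = cv H (j + 1) - cv H j
      in if n \<bullet> dir = 0 then 0 else
         (let t = (n \<bullet> (q - a)) / (n \<bullet> dir); x = a + t *\<^sub>R dir in
          if x \<in> open_tri p q r \<and> 0 < t \<and> t < 1 then sgn (n \<bullet> dir)
          else if x \<in> open_tri p q r \<and> (t = 0 \<or> t = 1) then sgn (n \<bullet> dir) / 2
          else 0))"

definition Delta :: "(nat \<Rightarrow> real^3) \<Rightarrow> nat \<Rightarrow> real" where
  "Delta H i = (\<Sum>j\<in>{1..6}. edge_tri_int H i j)"

definition joint_cc :: "(nat \<Rightarrow> real^3) \<Rightarrow> real \<times> real" where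
  "joint_cc H = (Delta H 2 * Delta H 4 * Delta H 6,
                 (Delta H 2)\<^sup>2 * (Delta H 4)\<^sup>2 * (Delta H 6)\<^sup>2 * hex_curl H)"

end

theory Submission
  imports Defs
begin

text \<open>For i = 2, 4, 6 the triangle T_i has two unit sides and a third side of length in (0, 2),
  so it is non-degenerate. The only edges of H that can meet T_i are e_(i+2) and e_(i+3), hence
  |\<Delta>_i| \<le> 1, and J(H) = (1,1) forces |\<Delta>_i| = 1 and curl(H) = 1. All the local
  information is carried by orientations of vertex quadruples; chasing their signs shows that each
  edge e_(i+2) passes upwards through the interior of T_i, which fixes the signs of nine
  orientations. In standard position each of the nine functions is a positive multiple of one
  of them.\<close>

definition orient :: "real^3 \<Rightarrow> real^3 \<Rightarrow> real^3 \<Rightarrow> real^3 \<Rightarrow> real" where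
  "orient a b c d = cross3 (b - a) (c - a) \<bullet> (d - a)"

lemma orient_expand: "orient a b c d =
   (b$1-a$1)*((c$2-a$2)*(d$3-a$3) - (c$3-a$3)*(d$2-a$2))
 - (b$2-a$2)*((c$1-a$1)*(d$3-a$3) - (c$3-a$3)*(d$1-a$1))
 + (b$3-a$3)*((c$1-a$1)*(d$2-a$2) - (c$2-a$2)*(d$1-a$1))"
  unfolding orient_def by (simp add: cross3_simps)

lemma inner_cross3_diff: "cross3 (q - p) (r - q) \<bullet> (x - y) = orient p q r x - orient p q r y"
  unfolding orient_expand by (simp add: cross3_simps)

lemma orient_degenerate: "orient p q r p = 0" "orient p q r q = 0" "orient p q r r = 0"
  unfolding orient_expand by (simp_all add: algebra_simps)

lemma orient_along_line: "orient s (s + t *\<^sub>R (e - s)) y z = t * orient s e y z"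
  unfolding orient_expand by (simp add: algebra_simps)

lemma orient_barycentric:
  assumes "x = a *\<^sub>R p + b *\<^sub>R q + c *\<^sub>R r" "a + b + c = 1"
  shows "orient s x p q = - c * orient p q r s" "orient s x q r = - a * orient p q r s"
    "orient s x r p = - b * orient p q r s"
proof -
  have c: "c = 1 - a - b" using assms(2) by simp
  show "orient s x p q = - c * orient p q r s" "orient s x q r = - a * orient p q r s"
    "orient s x r p = - b * orient p q r s"
    unfolding assms(1) c orient_expand by (simp_all add: algebra_simps)
qed

lemma vertex_notin_open_tri:
  assumes "cross3 (q - p) (r - q) \<noteq> 0"
  shows "p \<notin> open_tri p q r" "r \<notin> open_tri p q r"
proof -
  have "x \<noteq> p \<and> x \<noteq> r" if "x \<in> open_tri p q r" for x
  proof -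
    obtain a b c where x: "x = a *\<^sub>R p + b *\<^sub>R q + c *\<^sub>R r" "0 < a" "0 < b" "a + b + c = 1"
      using \<open>x \<in> open_tri p q r\<close> unfolding open_tri_def by blast
    have c: "c = 1 - a - b" using x(4) by simp
    have "cross3 (q - x) (r - x) = a *\<^sub>R cross3 (q - p) (r - q)"
      "cross3 (r - x) (p - x) = b *\<^sub>R cross3 (q - p) (r - q)"
      unfolding x(1) c by (simp_all add: cross3_simps)
    then show ?thesis using x assms by auto
  qed
  then show "p \<notin> open_tri p q r" "r \<notin> open_tri p q r" by blast+
qed

definition seg_tri_int :: "real^3 \<Rightarrow> real^3 \<Rightarrow> real^3 \<Rightarrow> real^3 \<Rightarrow> real^3 \<Rightarrow> real" where
  "seg_tri_int p q r s e =
     (let n = cross3 (q - p) (r - q); dir = e - s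
      in if n \<bullet> dir = 0 then 0 else
         (let t = (n \<bullet> (q - s)) / (n \<bullet> dir); x = s + t *\<^sub>R dir in
          if x \<in> open_tri p q r \<and> 0 < t \<and> t < 1 then sgn (n \<bullet> dir)
          else if x \<in> open_tri p q r \<and> (t = 0 \<or> t = 1) then sgn (n \<bullet> dir) / 2
          else 0))"

lemma edge_tri_int_eq_seg_tri_int:
  "edge_tri_int H i j = seg_tri_int (cv H (i + 5)) (cv H i) (cv H (i + 1)) (cv H j) (cv H (j + 1))"
  unfolding edge_tri_int_def seg_tri_int_def Let_def by simp

lemma seg_tri_int_parallel: "orient p q r s = orient p q r e \<Longrightarrow> seg_tri_int p q r s e = 0"
  unfolding seg_tri_int_def Let_def inner_cross3_diff by simp

lemma seg_tri_int_nonparallel: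
  fixes p q r s e :: "real^3"
  assumes "orient p q r s \<noteq> orient p q r e"
  defines "t \<equiv> orient p q r s / (orient p q r s - orient p q r e)"
  shows "seg_tri_int p q r s e =
    (if s + t *\<^sub>R (e - s) \<in> open_tri p q r \<and> 0 < t \<and> t < 1
       then sgn (orient p q r e - orient p q r s)
     else if s + t *\<^sub>R (e - s) \<in> open_tri p q r \<and> (t = 0 \<or> t = 1)
       then sgn (orient p q r e - orient p q r s) / 2
     else 0)"
proof -
  have param: "cross3 (q - p) (r - q) \<bullet> (q - s) / (cross3 (q - p) (r - q) \<bullet> (e - s)) = t"
    using assms(1) unfolding t_def inner_cross3_diff
    by (simp add: orient_degenerate divide_simps algebra_simps)
  show ?thesis
    using assms(1) unfolding seg_tri_int_def Let_def param by (auto simp: inner_cross3_diff)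
qed

lemma sgn_orient_through_open_tri:
  assumes "s + t *\<^sub>R (e - s) \<in> open_tri p q r" "0 < t"
  shows "sgn (orient s e p q) = - sgn (orient p q r s)" "sgn (orient s e q r) = - sgn (orient p q r s)"
    "sgn (orient s e r p) = - sgn (orient p q r s)"
proof -
  obtain a b c where x: "s + t *\<^sub>R (e - s) = a *\<^sub>R p + b *\<^sub>R q + c *\<^sub>R r"
    and abc: "0 < a" "0 < b" "0 < c" "a + b + c = 1"
    using assms(1) unfolding open_tri_def by blast
  have "t * orient s e p q = c * - orient p q r s" "t * orient s e q r = a * - orient p q r s"
    "t * orient s e r p = b * - orient p q r s"
    using orient_barycentric[OF x abc(4), of s] by (simp_all add: orient_along_line)
  then show "sgn (orient s e p q) = - sgn (orient p q r s)" "sgn (orient s e q r) = - sgn (orient p q r s)"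
    "sgn (orient s e r p) = - sgn (orient p q r s)"
    using abc assms(2) by (metis sgn_mult sgn_pos sgn_minus mult_1)+
qed

text \<open>The segment from s to e passes through the interior of the triangle pqr, from the negative
  to the positive side of its plane when \<sigma> = 1 and in the opposite direction when \<sigma> = -1:
  the last three conditions say that the line through s and e meets the plane inside the triangle.\<close>
definition crosses_tri :: "real^3 \<Rightarrow> real^3 \<Rightarrow> real^3 \<Rightarrow> real^3 \<Rightarrow> real^3 \<Rightarrow> real \<Rightarrow> bool" where
  "crosses_tri p q r s e \<sigma> \<longleftrightarrow>
     sgn (orient p q r s) = - \<sigma> \<and> sgn (orient p q r e) = \<sigma> \<and>
     sgn (orient s e p q) = \<sigma> \<and> sgn (orient s e q r) = \<sigma> \<and> sgn (orient s e r p) = \<sigma>"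

lemma sgn_of_quotient_in_unit_interval:
  fixes a b :: real
  assumes "0 < a / (a - b)" "a / (a - b) < 1"
  shows "sgn a = - sgn b" "sgn (b - a) = sgn b"
  using assms by (auto simp: sgn_if divide_simps split: if_splits)

lemma seg_tri_int_cases:
  fixes p q r s e :: "real^3"
  defines "Ds \<equiv> orient p q r s" and "De \<equiv> orient p q r e" and "I \<equiv> seg_tri_int p q r s e"
  shows "I = 0
    \<or> Ds = 0 \<and> De \<noteq> 0 \<and> I = sgn De / 2
    \<or> De = 0 \<and> Ds \<noteq> 0 \<and> I = - sgn Ds / 2
    \<or> \<bar>I\<bar> = 1 \<and> crosses_tri p q r s e I"
proof (cases "Ds = De")
  case True
  then show ?thesis unfolding I_def Ds_def De_def by (simp add: seg_tri_int_parallel)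
next
  case False
  define t where "t = Ds / (Ds - De)"
  define x where "x = s + t *\<^sub>R (e - s)"
  have I: "I = (if x \<in> open_tri p q r \<and> 0 < t \<and> t < 1 then sgn (De - Ds)
      else if x \<in> open_tri p q r \<and> (t = 0 \<or> t = 1) then sgn (De - Ds) / 2 else 0)"
    using seg_tri_int_nonparallel[of p q r s e] False
    unfolding I_def Ds_def De_def t_def x_def by simp
  consider "x \<in> open_tri p q r \<and> 0 < t \<and> t < 1" | "x \<in> open_tri p q r \<and> t = 0"
    | "x \<in> open_tri p q r \<and> t = 1" | "I = 0"
    using I by (cases "x \<in> open_tri p q r \<and> 0 < t \<and> t < 1") (auto split: if_splits)
  then show ?thesis
  proof cases
    case 1
    then have "sgn Ds = - sgn De" "sgn (De - Ds) = sgn De"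
      using sgn_of_quotient_in_unit_interval unfolding t_def by auto
    moreover have "De \<noteq> 0" using False \<open>sgn Ds = - sgn De\<close> by (auto simp: sgn_if split: if_splits)
    ultimately show ?thesis
      using 1 sgn_orient_through_open_tri[of s t e p q r] unfolding I x_def crosses_tri_def Ds_def De_def
      by (simp add: abs_sgn_eq)
  next
    case 2
    then have "Ds = 0" using False unfolding t_def by (simp add: divide_simps)
    then show ?thesis using I 2 False by simp
  next
    case 3
    then have "De = 0" using False unfolding t_def by (simp add: divide_simps)
    then show ?thesis using I 3 False by (simp add: sgn_minus)
  qed simp
qed

lemma seg_tri_int_in_plane: "seg_tri_int p q r p q = 0" "seg_tri_int p q r q r = 0"
  by (simp_all add: seg_tri_int_parallel orient_degenerate)

lemma seg_tri_int_from_vertex: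
  assumes "cross3 (q - p) (r - q) \<noteq> 0"
  shows "seg_tri_int p q r r u = 0"
  using seg_tri_int_nonparallel[of p q r r u] vertex_notin_open_tri[OF assms]
  by (cases "orient p q r u = 0") (auto simp: orient_degenerate seg_tri_int_parallel)

lemma seg_tri_int_to_vertex:
  assumes "cross3 (q - p) (r - q) \<noteq> 0"
  shows "seg_tri_int p q r w p = 0"
  using seg_tri_int_nonparallel[of p q r w p] vertex_notin_open_tri[OF assms]
  by (cases "orient p q r w = 0") (auto simp: orient_degenerate seg_tri_int_parallel)

definition hex_tri_int :: "real^3 \<Rightarrow> real^3 \<Rightarrow> real^3 \<Rightarrow> real^3 \<Rightarrow> real^3 \<Rightarrow> real^3 \<Rightarrow> real" where
  "hex_tri_int p q r u m w = seg_tri_int p q r p q + seg_tri_int p q r q r + seg_tri_int p q r r u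
     + seg_tri_int p q r u m + seg_tri_int p q r m w + seg_tri_int p q r w p"

text \<open>The path u, m, w passes once through the triangle pqr in direction \<sigma>: through the interior
  of the edge um, of the edge mw, or through its vertex m lying in the plane of the triangle.\<close>
definition path_crosses_tri :: "real^3 \<Rightarrow> real^3 \<Rightarrow> real^3 \<Rightarrow> real^3 \<Rightarrow> real^3 \<Rightarrow> real^3 \<Rightarrow> real \<Rightarrow> bool" where
  "path_crosses_tri p q r u m w \<sigma> \<longleftrightarrow>
     crosses_tri p q r u m \<sigma> \<or> crosses_tri p q r m w \<sigma> \<or>
     (orient p q r m = 0 \<and> sgn (orient p q r u) = - \<sigma> \<and> sgn (orient p q r w) = \<sigma>)"

lemma hex_tri_int_unit:
  fixes p q r u m w :: "real^3"
  assumes nondegenerate: "cross3 (q - p) (r - q) \<noteq> 0"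
  defines "Du \<equiv> orient p q r u" and "Dm \<equiv> orient p q r m" and "Dw \<equiv> orient p q r w"
    and "a \<equiv> seg_tri_int p q r u m" and "b \<equiv> seg_tri_int p q r m w"
  shows "\<bar>hex_tri_int p q r u m w\<bar> \<le> 1"
    and "\<bar>hex_tri_int p q r u m w\<bar> = 1 \<Longrightarrow> path_crosses_tri p q r u m w (hex_tri_int p q r u m w)"
proof -
  have sum: "hex_tri_int p q r u m w = a + b"
    unfolding hex_tri_int_def seg_tri_int_in_plane seg_tri_int_from_vertex[OF nondegenerate]
      seg_tri_int_to_vertex[OF nondegenerate] a_def b_def by simp
  have a: "a = 0 \<or> Du = 0 \<and> Dm \<noteq> 0 \<and> a = sgn Dm / 2 \<or> Dm = 0 \<and> Du \<noteq> 0 \<and> a = - sgn Du / 2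
      \<or> \<bar>a\<bar> = 1 \<and> sgn Dm = a \<and> crosses_tri p q r u m a"
    using seg_tri_int_cases[of p q r u m] unfolding a_def Du_def Dm_def crosses_tri_def by blast
  have b: "b = 0 \<or> Dm = 0 \<and> Dw \<noteq> 0 \<and> b = sgn Dw / 2 \<or> Dw = 0 \<and> Dm \<noteq> 0 \<and> b = - sgn Dm / 2
      \<or> \<bar>b\<bar> = 1 \<and> sgn Dm = - b \<and> crosses_tri p q r m w b"
    using seg_tri_int_cases[of p q r m w] unfolding b_def Dw_def Dm_def crosses_tri_def by auto
  show "\<bar>hex_tri_int p q r u m w\<bar> \<le> 1"
    unfolding sum using a b by (auto simp: sgn_if split: if_splits)
  show "path_crosses_tri p q r u m w (hex_tri_int p q r u m w)"
    if "\<bar>hex_tri_int p q r u m w\<bar> = 1"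
    using that a b unfolding sum path_crosses_tri_def Du_def [symmetric] Dm_def [symmetric]
      Dw_def [symmetric] by (auto simp: sgn_if split: if_splits)
qed

lemma abs_eq_1_if_prod_eq_1:
  fixes x y z :: real
  assumes "\<bar>x\<bar> \<le> 1" "\<bar>y\<bar> \<le> 1" "\<bar>z\<bar> \<le> 1" and "x * y * z = 1"
  shows "\<bar>x\<bar> = 1" "\<bar>y\<bar> = 1" "\<bar>z\<bar> = 1"
proof -
  have "\<bar>a\<bar> = 1" if "\<bar>a\<bar> \<le> 1" "\<bar>b\<bar> \<le> 1" "\<bar>c\<bar> \<le> 1" "\<bar>a\<bar> * (\<bar>b\<bar> * \<bar>c\<bar>) = 1"
    for a b c :: real
  proof -
    have "1 = \<bar>a\<bar> * (\<bar>b\<bar> * \<bar>c\<bar>)" using that(4) by simp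
    also have "\<dots> \<le> \<bar>a\<bar>" using that(2,3) mult_left_mono[of "\<bar>b\<bar> * \<bar>c\<bar>" 1 "\<bar>a\<bar>"]
      by (simp add: mult_le_one)
    finally show ?thesis using that(1) by simp
  qed
  moreover have "\<bar>x\<bar> * \<bar>y\<bar> * \<bar>z\<bar> = 1" using assms(4) by (metis abs_mult abs_one)
  then have "\<bar>x\<bar> * (\<bar>y\<bar> * \<bar>z\<bar>) = 1" "\<bar>y\<bar> * (\<bar>x\<bar> * \<bar>z\<bar>) = 1"
    "\<bar>z\<bar> * (\<bar>x\<bar> * \<bar>y\<bar>) = 1"
    by (simp_all add: ac_simps)
  ultimately show "\<bar>x\<bar> = 1" "\<bar>y\<bar> = 1" "\<bar>z\<bar> = 1"
    using assms(1-3) by blast+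
qed

lemma hexagon_crossings:
  fixes v1 v2 v3 v4 v5 v6 :: "real^3" and \<sigma>2 \<sigma>4 \<sigma>6 :: real
  assumes "path_crosses_tri v1 v2 v3 v4 v5 v6 \<sigma>2" "path_crosses_tri v3 v4 v5 v6 v1 v2 \<sigma>4"
    "path_crosses_tri v5 v6 v1 v2 v3 v4 \<sigma>6"
    and "\<sigma>2 * \<sigma>4 * \<sigma>6 = 1" and "0 < orient v1 v2 v3 v5"
  shows "crosses_tri v1 v2 v3 v4 v5 1 \<and> crosses_tri v3 v4 v5 v6 v1 1 \<and> crosses_tri v5 v6 v1 v2 v3 1"
proof -
  have canonical:
    "orient v4 v5 v1 v2 = orient v1 v2 v4 v5" "orient v4 v5 v2 v3 = orient v2 v3 v4 v5"
    "orient v4 v5 v3 v1 = - orient v1 v3 v4 v5" "orient v5 v6 v1 v2 = orient v1 v2 v5 v6"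
    "orient v5 v6 v2 v3 = orient v2 v3 v5 v6" "orient v5 v6 v3 v1 = - orient v1 v3 v5 v6"
    "orient v3 v4 v5 v1 = - orient v1 v3 v4 v5" "orient v3 v4 v5 v2 = - orient v2 v3 v4 v5"
    "orient v6 v1 v3 v4 = - orient v1 v3 v4 v6" "orient v6 v1 v4 v5 = - orient v1 v4 v5 v6"
    "orient v6 v1 v5 v3 = orient v1 v3 v5 v6" "orient v1 v2 v5 v3 = - orient v1 v2 v3 v5"
    "orient v5 v6 v1 v3 = orient v1 v3 v5 v6" "orient v5 v6 v1 v4 = orient v1 v4 v5 v6"
    "orient v2 v3 v6 v1 = - orient v1 v2 v3 v6" "orient v2 v3 v1 v5 = orient v1 v2 v3 v5"
    "orient v3 v4 v6 v1 = - orient v1 v3 v4 v6" "orient v3 v4 v1 v5 = orient v1 v3 v4 v5"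
    by (simp_all add: orient_expand algebra_simps)
  have sgn_iffs: "sgn x = 1 \<longleftrightarrow> 0 < x" "sgn x = -1 \<longleftrightarrow> x < 0"
    "- sgn x = 1 \<longleftrightarrow> x < 0" "- sgn x = -1 \<longleftrightarrow> 0 < x" for x :: real
    by (auto simp: sgn_if)
  have "\<sigma> \<in> {-1, 0, 1}" if "path_crosses_tri p q r u m w \<sigma>" for p q r u m w :: "real^3" and \<sigma>
  proof -
    have "\<exists>x. sgn x = \<sigma>" using that unfolding path_crosses_tri_def crosses_tri_def by blast
    then show ?thesis by (auto simp: sgn_if split: if_splits)
  qed
  then have "\<sigma>2 \<in> {-1, 0, 1}" "\<sigma>4 \<in> {-1, 0, 1}" "\<sigma>6 \<in> {-1, 0, 1}"
    using assms(1-3) by blast+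
  then consider "\<sigma>2 = 1" "\<sigma>4 = 1" "\<sigma>6 = 1" | "\<sigma>2 = 1" "\<sigma>4 = -1" "\<sigma>6 = -1"
    | "\<sigma>2 = -1" "\<sigma>4 = 1" "\<sigma>6 = -1" | "\<sigma>2 = -1" "\<sigma>4 = -1" "\<sigma>6 = 1"
    using assms(4) by auto
  txt \<open>In every pattern except \<sigma>2 = \<sigma>4 = \<sigma>6 = 1 two of the crossings prescribe opposite signs
    for the orientation of one tetrahedron.\<close>
  then show ?thesis
    using assms(1-3,5) unfolding path_crosses_tri_def crosses_tri_def canonical
    by cases (auto simp: sgn_iffs sgn_minus)
qed

lemma sum_atLeastAtMost_1_6: "(\<Sum>j\<in>{1..6::nat}. f j) = f 1 + f 2 + f 3 + f 4 + f 5 + f 6"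
  by (simp add: numeral_eq_Suc sum.atLeast_Suc_atMost add.assoc)

lemma cv_eq_vertex: "Suc ((k + 5) mod 6) = m \<Longrightarrow> cv H k = H m"
  unfolding cv_def by simp

lemma cv_numeral: "cv H 1 = H 1" "cv H 2 = H 2" "cv H 3 = H 3" "cv H 4 = H 4" "cv H 5 = H 5"
  "cv H 6 = H 6" "cv H 7 = H 1" "cv H 9 = H 3" "cv H 11 = H 5"
  by (rule cv_eq_vertex; simp)+

lemma equilateral_hex_iff:
  "equilateral_hex H \<longleftrightarrow> dist (H 1) (H 2) = 1 \<and> dist (H 2) (H 3) = 1 \<and> dist (H 3) (H 4) = 1
     \<and> dist (H 4) (H 5) = 1 \<and> dist (H 5) (H 6) = 1 \<and> dist (H 6) (H 1) = 1"
proof -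
  have "{1..6::nat} = {1, 2, 3, 4, 5, 6}" by auto
  then show ?thesis unfolding equilateral_hex_def by (simp add: cv_numeral del: One_nat_def)
qed

lemma Delta_eq_hex_tri_int:
  "Delta H 2 = hex_tri_int (H 1) (H 2) (H 3) (H 4) (H 5) (H 6)"
  "Delta H 4 = hex_tri_int (H 3) (H 4) (H 5) (H 6) (H 1) (H 2)"
  "Delta H 6 = hex_tri_int (H 5) (H 6) (H 1) (H 2) (H 3) (H 4)"
  unfolding Delta_def sum_atLeastAtMost_1_6 edge_tri_int_eq_seg_tri_int hex_tri_int_def
  by (simp_all add: cv_numeral del: One_nat_def)

lemma hex_curl_eq_sgn_orient: "hex_curl H = sgn (orient (H 1) (H 2) (H 3) (H 5))"
  unfolding hex_curl_def orient_def by (simp add: cross3_simps)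

lemma cross3_nonzero_if_unit_sides:
  fixes p q r :: "real^3"
  assumes "dist p q = 1" "dist q r = 1" "0 < dist p r" "dist p r < 2"
  shows "cross3 (q - p) (r - q) \<noteq> 0"
proof
  assume collinear: "cross3 (q - p) (r - q) = 0"
  define x y where "x = q - p" and "y = r - q"
  have "norm x = 1" "norm y = 1" using assms(1,2) unfolding x_def y_def by (simp_all add: dist_norm norm_minus_commute)
  then have "(x \<bullet> y)\<^sup>2 = 1" using norm_cross_dot[of x y] collinear unfolding x_def y_def by simp
  moreover have "(dist p r)\<^sup>2 = (norm (x + y))\<^sup>2"
    unfolding dist_norm x_def y_def by (simp add: norm_minus_commute)
  then have "(dist p r)\<^sup>2 = 2 + 2 * (x \<bullet> y)"
    using \<open>norm x = 1\<close> \<open>norm y = 1\<close>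
    by (simp add: power2_norm_eq_inner inner_add_left inner_add_right inner_commute norm_eq_1)
  moreover have "0 < (dist p r)\<^sup>2" using assms(3) by simp
  moreover have "(dist p r)\<^sup>2 < 2\<^sup>2" using assms(4) by (intro power_strict_mono) auto
  ultimately show False by (auto simp: power2_eq_1_iff)
qed

lemma joint_cc_crossings:
  assumes "equilateral_hex H"
    and "0 < dist (H 1) (H 3)" "dist (H 1) (H 3) < 2" "0 < dist (H 3) (H 5)" "dist (H 3) (H 5) < 2"
      "0 < dist (H 5) (H 1)" "dist (H 5) (H 1) < 2"
    and "joint_cc H = (1, 1)"
  shows "crosses_tri (H 1) (H 2) (H 3) (H 4) (H 5) 1 \<and> crosses_tri (H 3) (H 4) (H 5) (H 6) (H 1) 1
    \<and> crosses_tri (H 5) (H 6) (H 1) (H 2) (H 3) 1"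
proof -
  have edges: "dist (H 1) (H 2) = 1" "dist (H 2) (H 3) = 1" "dist (H 3) (H 4) = 1"
    "dist (H 4) (H 5) = 1" "dist (H 5) (H 6) = 1" "dist (H 6) (H 1) = 1"
    using assms(1) unfolding equilateral_hex_iff by blast+
  note tri = cross3_nonzero_if_unit_sides[OF edges(1,2) assms(2,3)]
    cross3_nonzero_if_unit_sides[OF edges(3,4) assms(4,5)]
    cross3_nonzero_if_unit_sides[OF edges(5,6) assms(6,7)]
  have product: "Delta H 2 * Delta H 4 * Delta H 6 = 1"
    and curl_eq: "(Delta H 2)\<^sup>2 * (Delta H 4)\<^sup>2 * (Delta H 6)\<^sup>2 * hex_curl H = 1"
    using assms(8) unfolding joint_cc_def by simp_all
  have "hex_curl H = 1"
    using curl_eq unfolding power_mult_distrib [symmetric] product by simp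
  then have curl: "0 < orient (H 1) (H 2) (H 3) (H 5)"
    unfolding hex_curl_eq_sgn_orient by (simp add: sgn_1_pos)
  have "\<bar>Delta H 2\<bar> \<le> 1" "\<bar>Delta H 4\<bar> \<le> 1" "\<bar>Delta H 6\<bar> \<le> 1"
    unfolding Delta_eq_hex_tri_int by (simp_all only: hex_tri_int_unit(1)[OF tri(1)]
      hex_tri_int_unit(1)[OF tri(2)] hex_tri_int_unit(1)[OF tri(3)])
  from abs_eq_1_if_prod_eq_1[OF this product]
  have "path_crosses_tri (H 1) (H 2) (H 3) (H 4) (H 5) (H 6) (Delta H 2)"
    "path_crosses_tri (H 3) (H 4) (H 5) (H 6) (H 1) (H 2) (Delta H 4)"
    "path_crosses_tri (H 5) (H 6) (H 1) (H 2) (H 3) (H 4) (Delta H 6)"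
    unfolding Delta_eq_hex_tri_int
    by (simp_all only: hex_tri_int_unit(2)[OF tri(1)] hex_tri_int_unit(2)[OF tri(2)]
      hex_tri_int_unit(2)[OF tri(3)])
  from hexagon_crossings[OF this product curl] show ?thesis .
qed

lemma perp_toward_planar:
  fixes a b c :: "real^3"
  assumes planar: "a$3 = 0" "b$3 = 0" "c$3 = 0"
    and left: "0 < (b$1 - a$1) * (c$2 - a$2) - (b$2 - a$2) * (c$1 - a$1)"
  shows "perp_toward a b c = (1 / norm (b - a)) *\<^sub>R vector [-(b$2 - a$2), b$1 - a$1, 0]"
proof -
  have residual: "w - (w \<bullet> v / (v \<bullet> v)) *\<^sub>R v
      = ((v$1 * w$2 - v$2 * w$1) / (v \<bullet> v)) *\<^sub>R vector [- v$2, v$1, 0]"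
    if "v$3 = 0" "w$3 = 0" "0 < v \<bullet> v" for v w :: "real^3"
  proof -
    have vv: "v \<bullet> v = (v$1)\<^sup>2 + (v$2)\<^sup>2" "w \<bullet> v = w$1 * v$1 + w$2 * v$2"
      using that by (simp_all add: inner_vec_def sum_3 power2_eq_square)
    moreover have "(v$1)\<^sup>2 + (v$2)\<^sup>2 \<noteq> 0" using that(3) unfolding vv(1) by linarith
    ultimately show ?thesis
      using that by (simp add: vec_eq_iff forall_3 field_simps power2_eq_square)
  qed
  define v w J where "v = b - a" and "w = c - a" and "J = (vector [- v$2, v$1, 0] :: real^3)"
  define k where "k = (v$1 * w$2 - v$2 * w$1) / (v \<bullet> v)"
  have "v$3 = 0" "w$3 = 0" using planar unfolding v_def w_def by simp_all
  have "v \<noteq> 0" using left unfolding v_def by auto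
  then have "0 < v \<bullet> v" by simp
  then have "0 < k" using left unfolding k_def v_def w_def by simp
  have "norm J = norm v"
    using \<open>v$3 = 0\<close> unfolding J_def by (simp add: norm_eq_sqrt_inner inner_vec_def sum_3 add.commute)
  have "perp_toward a b c = (1 / norm (k *\<^sub>R J)) *\<^sub>R (k *\<^sub>R J)"
    using residual[OF \<open>v$3 = 0\<close> \<open>w$3 = 0\<close> \<open>0 < v \<bullet> v\<close>]
    unfolding perp_toward_def Let_def k_def J_def v_def w_def by simp
  also have "\<dots> = (1 / norm v) *\<^sub>R J" using \<open>0 < k\<close> \<open>norm J = norm v\<close> by simp
  finally show ?thesis unfolding J_def v_def by simp
qed

lemma norm_real3: "norm (x :: real^3) = sqrt ((x$1)\<^sup>2 + (x$2)\<^sup>2 + (x$3)\<^sup>2)"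
  by (simp add: norm_eq_sqrt_inner inner_vec_def sum_3 power2_eq_square)

lemma action_angle_coordinates:
  assumes "standard_position H" and "action_angle H d1 d2 d3 t1 t2 t3"
  defines "X \<equiv> H 5 $ 1" and "Y \<equiv> H 5 $ 2"
  shows "0 < Y" "d2^2 = d1^2 + d3^2 - 2*d1*X" "Y^2 = d3^2 - X^2"
    and "H 1 = 0" "H 2 = vector [d1/2, sqrt (4 - d1^2)/2 * cos t1, sqrt (4 - d1^2)/2 * sin t1]"
      "H 3 = vector [d1, 0, 0]"
      "H 4 = vector [(d1 + X)/2 - sqrt (4 - d2^2)/2 * cos t2 * Y/d2,
                     Y/2 + sqrt (4 - d2^2)/2 * cos t2 * (X - d1)/d2, sqrt (4 - d2^2)/2 * sin t2]"
      "H 5 = vector [X, Y, 0]"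
      "H 6 = vector [X/2 + sqrt (4 - d3^2)/2 * cos t3 * Y/d3,
                     Y/2 - sqrt (4 - d3^2)/2 * cos t3 * X/d3, sqrt (4 - d3^2)/2 * sin t3]"
proof -
  have std: "H 1 = 0" "0 < H 3 $ 1" "H 3 $ 2 = 0" "H 3 $ 3 = 0" "H 5 $ 3 = 0" "0 < Y"
    using assms(1) unfolding standard_position_def Y_def by auto
  have d: "d1 = dist (H 3) (H 1)" "d2 = dist (H 5) (H 3)" "d3 = dist (H 1) (H 5)" "0 < d1"
    using assms(2) unfolding action_angle_def by auto
  have H3: "H 3 = vector [d1, 0, 0]"
    using d(1) std by (simp add: vec_eq_iff forall_3 dist_norm norm_real3)
  have H5: "H 5 = vector [X, Y, 0]"
    using std unfolding X_def Y_def by (simp add: vec_eq_iff forall_3)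
  have d2: "d2^2 = (X - d1)^2 + Y^2" and d3: "d3^2 = X^2 + Y^2"
    using d(2,3) std unfolding H3 H5 by (simp_all add: dist_norm norm_real3)
  have apex:
    "H 2 = midpoint (H 1) (H 3) + (sqrt (4 - d1\<^sup>2) / 2) *\<^sub>R
       (cos t1 *\<^sub>R perp_toward (H 1) (H 3) (H 5) + sin t1 *\<^sub>R e_z)"
    "H 4 = midpoint (H 3) (H 5) + (sqrt (4 - d2\<^sup>2) / 2) *\<^sub>R
       (cos t2 *\<^sub>R perp_toward (H 3) (H 5) (H 1) + sin t2 *\<^sub>R e_z)"
    "H 6 = midpoint (H 5) (H 1) + (sqrt (4 - d3\<^sup>2) / 2) *\<^sub>R
       (cos t3 *\<^sub>R perp_toward (H 5) (H 1) (H 3) + sin t3 *\<^sub>R e_z)"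
    using assms(2) unfolding action_angle_def by blast+
  have norms: "norm (H 3 - H 1) = d1" "norm (H 5 - H 3) = d2" "norm (H 1 - H 5) = d3"
    using d(1-3) by (simp_all add: dist_norm)
  have "perp_toward (H 1) (H 3) (H 5) = vector [0, 1, 0]"
    using perp_toward_planar[of "H 1" "H 3" "H 5", unfolded norms] std d(4) unfolding H3 H5
    by (simp add: vec_eq_iff forall_3)
  moreover have "perp_toward (H 3) (H 5) (H 1) = (1 / d2) *\<^sub>R vector [- Y, X - d1, 0]"
    using perp_toward_planar[of "H 3" "H 5" "H 1", unfolded norms] std d(4) unfolding H3 H5
    by simp
  moreover have "perp_toward (H 5) (H 1) (H 3) = (1 / d3) *\<^sub>R vector [Y, - X, 0]"
    using perp_toward_planar[of "H 5" "H 1" "H 3", unfolded norms] std d(4) unfolding H3 H5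
    by (simp add: algebra_simps)
  ultimately show "H 2 = vector [d1/2, sqrt (4 - d1^2)/2 * cos t1, sqrt (4 - d1^2)/2 * sin t1]"
    "H 4 = vector [(d1 + X)/2 - sqrt (4 - d2^2)/2 * cos t2 * Y/d2,
                   Y/2 + sqrt (4 - d2^2)/2 * cos t2 * (X - d1)/d2, sqrt (4 - d2^2)/2 * sin t2]"
    "H 6 = vector [X/2 + sqrt (4 - d3^2)/2 * cos t3 * Y/d3,
                   Y/2 - sqrt (4 - d3^2)/2 * cos t3 * X/d3, sqrt (4 - d3^2)/2 * sin t3]"
    unfolding apex H3 H5 std(1) by (simp_all add: vec_eq_iff forall_3 midpoint_def e_z_def algebra_simps)
  show "d2^2 = d1^2 + d3^2 - 2*d1*X" "Y^2 = d3^2 - X^2"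
    unfolding d2 d3 by (simp_all add: power2_diff)
  show "0 < Y" "H 1 = 0" "H 3 = vector [d1, 0, 0]" "H 5 = vector [X, Y, 0]"
    using std H3 H5 by simp_all
qed

lemma sqrt_heron_eq:
  fixes d1 d2 d3 X Y :: real
  assumes "0 < d1" "0 \<le> Y" "d2^2 = d1^2 + d3^2 - 2*d1*X" "Y^2 = d3^2 - X^2"
  shows "sqrt (2*d1^2*d2^2 + 2*d1^2*d3^2 + 2*d2^2*d3^2 - d1^4 - d2^4 - d3^4) = 2*d1*Y"
proof -
  have "2*d1^2*d2^2 + 2*d1^2*d3^2 + 2*d2^2*d3^2 - d1^4 - d2^4 - d3^4
      = 4*d1^2*d3^2 - (d1^2 + d3^2 - d2^2)^2"
    by algebra
  also have "\<dots> = 4*d1^2*d3^2 - (2*d1*X)^2" unfolding assms(3) by simp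
  also have "\<dots> = (2*d1*Y)^2" unfolding power_mult_distrib assms(4) by (simp add: algebra_simps)
  finally show ?thesis using assms(1,2) by simp
qed

text \<open>Here r_i, c_i, s_i stand for sqrt (4 - d_i^2), cos \<theta>_i, sin \<theta>_i; the identities
  do not depend on these relations.\<close>
lemma action_angle_functions_eq_orient:
  fixes v1 v2 v3 v4 v5 v6 :: "real^3"
    and d1 d2 d3 d X Y r1 r2 r3 c1 c2 c3 s1 s2 s3 :: real
  assumes pos: "0 < d1" "0 < d2" "0 < d3"
    and triangle: "d2^2 = d1^2 + d3^2 - 2*d1*X" "Y^2 = d3^2 - X^2"
    and d: "d = 2*d1*Y" and roots: "r1 \<noteq> 0" "r2 \<noteq> 0" "r3 \<noteq> 0"
    and v: "v1 = 0" "v2 = vector [d1/2, r1/2 * c1, r1/2 * s1]" "v3 = vector [d1, 0, 0]"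
      "v4 = vector [(d1 + X)/2 - r2/2 * c2 * Y/d2, Y/2 + r2/2 * c2 * (X - d1)/d2, r2/2 * s2]"
      "v5 = vector [X, Y, 0]"
      "v6 = vector [X/2 + r3/2 * c3 * Y/d3, Y/2 - r3/2 * c3 * X/d3, r3/2 * s3]"
  shows "d2 * r2 * s2 * (d3*d - (d1^2 - d2^2 + d3^2) * r3 * c3)
        - d3 * r3 * s3 * (d2*d - (d1^2 + d2^2 - d3^2) * r2 * c2) = 8*d2*d3 * orient v6 v1 v3 v4"
    and "r2 * ((- (d1^2) + d2^2 + d3^2) / (2*d2*d3) * c2 * s3 + s2 * c3) - d * s3 / (2*d3)
        = 4 * orient v6 v1 v4 v5 / (d3 * r3)"
    and "r3 * ((- (d1^2) + d2^2 + d3^2) / (2*d2*d3) * c3 * s2 + s3 * c2) - d * s2 / (2*d2)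
        = 4 * (- orient v3 v4 v5 v6) / (d2 * r2)"
    and "d3 * r3 * s3 * (d1*d - (d1^2 + d2^2 - d3^2) * r1 * c1)
        - d1 * r1 * s1 * (d3*d - (- (d1^2) + d2^2 + d3^2) * r3 * c3) = 8*d1*d3 * orient v2 v3 v5 v6"
    and "r3 * ((d1^2 - d2^2 + d3^2) / (2*d1*d3) * c3 * s1 + s3 * c1) - d * s1 / (2*d1)
        = 4 * orient v2 v3 v6 v1 / (d1 * r1)"
    and "r1 * ((d1^2 - d2^2 + d3^2) / (2*d1*d3) * c1 * s3 + s1 * c3) - d * s3 / (2*d3)
        = 4 * (- orient v5 v6 v1 v2) / (d3 * r3)"
    and "d1 * r1 * s1 * (d2*d - (- (d1^2) + d2^2 + d3^2) * r2 * c2)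
        - d2 * r2 * s2 * (d1*d - (d1^2 - d2^2 + d3^2) * r1 * c1) = 8*d1*d2 * orient v4 v5 v1 v2"
    and "r1 * ((d1^2 + d2^2 - d3^2) / (2*d1*d2) * c1 * s2 + s1 * c2) - d * s2 / (2*d2)
        = 4 * orient v4 v5 v2 v3 / (d2 * r2)"
    and "r2 * ((d1^2 + d2^2 - d3^2) / (2*d1*d2) * c2 * s1 + s2 * c1) - d * s1 / (2*d1)
        = 4 * (- orient v1 v2 v3 v4) / (d1 * r1)"
  using pos roots triangle unfolding v d orient_expand vector_3
  by (simp_all add: field_simps) algebra+

theorem mainTheorem4:
  fixes H :: "nat \<Rightarrow> real^3" and d1 d2 d3 t1 t2 t3 d :: real
  assumes "equilateral_hex H" and "embedded_hex H" and "standard_position H"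
    and "action_angle H d1 d2 d3 t1 t2 t3"
    and "d = sqrt (2*d1^2*d2^2 + 2*d1^2*d3^2 + 2*d2^2*d3^2 - d1^4 - d2^4 - d3^4)"
    and "joint_cc H = (1, 1)"
  shows
   "0 < d2 * sqrt (4 - d2^2) * sin t2 * (d3*d - (d1^2 - d2^2 + d3^2) * sqrt (4 - d3^2) * cos t3)
        - d3 * sqrt (4 - d3^2) * sin t3 * (d2*d - (d1^2 + d2^2 - d3^2) * sqrt (4 - d2^2) * cos t2)
  \<and> 0 < sqrt (4 - d2^2) * ((- (d1^2) + d2^2 + d3^2) / (2*d2*d3) * cos t2 * sin t3 + sin t2 * cos t3)
        - d * sin t3 / (2*d3)
  \<and> 0 < sqrt (4 - d3^2) * ((- (d1^2) + d2^2 + d3^2) / (2*d2*d3) * cos t3 * sin t2 + sin t3 * cos t2)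
        - d * sin t2 / (2*d2)
  \<and> 0 < d3 * sqrt (4 - d3^2) * sin t3 * (d1*d - (d1^2 + d2^2 - d3^2) * sqrt (4 - d1^2) * cos t1)
        - d1 * sqrt (4 - d1^2) * sin t1 * (d3*d - (- (d1^2) + d2^2 + d3^2) * sqrt (4 - d3^2) * cos t3)
  \<and> 0 < sqrt (4 - d3^2) * ((d1^2 - d2^2 + d3^2) / (2*d1*d3) * cos t3 * sin t1 + sin t3 * cos t1)
        - d * sin t1 / (2*d1)
  \<and> 0 < sqrt (4 - d1^2) * ((d1^2 - d2^2 + d3^2) / (2*d1*d3) * cos t1 * sin t3 + sin t1 * cos t3)
        - d * sin t3 / (2*d3)
  \<and> 0 < d1 * sqrt (4 - d1^2) * sin t1 * (d2*d - (- (d1^2) + d2^2 + d3^2) * sqrt (4 - d2^2) * cos t2)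
        - d2 * sqrt (4 - d2^2) * sin t2 * (d1*d - (d1^2 - d2^2 + d3^2) * sqrt (4 - d1^2) * cos t1)
  \<and> 0 < sqrt (4 - d1^2) * ((d1^2 + d2^2 - d3^2) / (2*d1*d2) * cos t1 * sin t2 + sin t1 * cos t2)
        - d * sin t2 / (2*d2)
  \<and> 0 < sqrt (4 - d2^2) * ((d1^2 + d2^2 - d3^2) / (2*d1*d2) * cos t2 * sin t1 + sin t2 * cos t1)
        - d * sin t1 / (2*d1)"
proof -
  note coords = action_angle_coordinates[OF assms(3,4)]
  have d: "0 < d1" "d1 < 2" "0 < d2" "d2 < 2" "0 < d3" "d3 < 2"
    and dist: "dist (H 1) (H 3) = d1" "dist (H 3) (H 5) = d2" "dist (H 5) (H 1) = d3"
    using assms(4) unfolding action_angle_def by (auto simp: dist_commute)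
  have d_eq: "d = 2 * d1 * H 5 $ 2"
    unfolding assms(5) by (rule sqrt_heron_eq[OF d(1) less_imp_le[OF coords(1)] coords(2,3)])
  have "0 < sqrt (4 - x^2)" if "0 < x" "x < 2" for x :: real
    using that power_strict_mono[of x 2 2] by simp
  then have roots: "0 < sqrt (4 - d1^2)" "0 < sqrt (4 - d2^2)" "0 < sqrt (4 - d3^2)"
    using d by simp_all
  note identities = action_angle_functions_eq_orient[OF d(1,3,5) coords(2,3) d_eq
      roots[THEN less_imp_neq, symmetric] coords(4-9)]
  have "crosses_tri (H 1) (H 2) (H 3) (H 4) (H 5) 1 \<and> crosses_tri (H 3) (H 4) (H 5) (H 6) (H 1) 1
    \<and> crosses_tri (H 5) (H 6) (H 1) (H 2) (H 3) 1"
    using assms(1,6) d unfolding dist [symmetric] by (intro joint_cc_crossings)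
  then have signs: "0 < - orient (H 1) (H 2) (H 3) (H 4)" "0 < orient (H 4) (H 5) (H 1) (H 2)"
    "0 < orient (H 4) (H 5) (H 2) (H 3)" "0 < - orient (H 3) (H 4) (H 5) (H 6)"
    "0 < orient (H 6) (H 1) (H 3) (H 4)" "0 < orient (H 6) (H 1) (H 4) (H 5)"
    "0 < - orient (H 5) (H 6) (H 1) (H 2)" "0 < orient (H 2) (H 3) (H 5) (H 6)"
    "0 < orient (H 2) (H 3) (H 6) (H 1)"
    unfolding crosses_tri_def by (simp_all add: sgn_1_pos sgn_1_neg)
  show ?thesis
    unfolding identities
    by (intro conjI mult_pos_pos divide_pos_pos zero_less_numeral signs roots d(1,3,5))
qed

end
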